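(* For every integer $k\ge1$ and variables $x_1,\dots,x_k$, from the axioms $\{0\le x_i\le1\}_{i\in[k]}$ there is a degree-$2k$ sum-of-squares derivation of $$\prod_{i=1}^kx_i-\Big(\prod_{i=1}^kx_i\Big)^2\le\sum_{i=1}^k(x_i-x_i^2).$$
   Context: A degree-$d$ sum-of-squares derivation of $p\le q$ from axioms $\{g_j\ge0\}$ means $q-p=s+\sum_t r_tG_t$ with $s,r_t$ sums of squares, each $G_t$ a product of axiom polynomials $g_j$, and all terms of degree at most $d$. *)

theory Defs
  imports Complex_Main "HOL-Library.Poly_Mapping"
begin

text \<open>Multivariate real polynomials in variables x_0, x_1, ...:
  a monomial is a finitely supported exponent vector (nat \<Rightarrow>0 nat),
  a polynomial is a finitely supported map from monomials to real coefficients.\<close>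

type_synonym mpoly = "(nat \<Rightarrow>\<^sub>0 nat) \<Rightarrow>\<^sub>0 real"

definition Var :: "nat \<Rightarrow> mpoly" where
  "Var i = Poly_Mapping.single (Poly_Mapping.single i 1) 1"

definition mdeg :: "(nat \<Rightarrow>\<^sub>0 nat) \<Rightarrow> nat" where
  "mdeg m = sum (Poly_Mapping.lookup m) (Poly_Mapping.keys m)"

text \<open>Total degree (the zero polynomial gets degree 0).\<close>
definition tdeg :: "mpoly \<Rightarrow> nat" where
  "tdeg p = Max (insert 0 (mdeg ` Poly_Mapping.keys p))"

text \<open>Degree-d sum-of-squares derivation of  p \<le> q  from axioms g_j \<ge> 0 (the list axs):
  q - p = s + \<Sum>_t r_t G_t, s and r_t sums of squares, G_t products of axioms
  (given by a list of axiom indices, repetitions allowed), every term of degree \<le> d.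
  Each r_t G_t is split into its individual square summands q^2 G_t; the degree
  bound is imposed on each such summand (and on each square of s).\<close>
definition sos_derivation :: "mpoly list \<Rightarrow> nat \<Rightarrow> mpoly \<Rightarrow> mpoly \<Rightarrow> bool" where
  "sos_derivation axs d p q \<longleftrightarrow>
     (\<exists>(ss :: mpoly list) (rs :: (mpoly \<times> nat list) list).
        q - p = sum_list (map (\<lambda>s. s * s) ss)
              + sum_list (map (\<lambda>(r, js). r * r * prod_list (map (\<lambda>j. axs ! j) js)) rs)
      \<and> (\<forall>s\<in>set ss. tdeg (s * s) \<le> d)
      \<and> (\<forall>(r, js)\<in>set rs. (\<forall>j\<in>set js. j < length axs)
             \<and> tdeg (r * r * prod_list (map (\<lambda>j. axs ! j) js)) \<le> d))"

text \<open>Axioms 0 \<le> x_i and x_i \<le> 1 (i.e. 1 - x_i \<ge> 0) for i < k (variables indexed from 0).\<close>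
definition box_axioms :: "nat \<Rightarrow> mpoly list" where
  "box_axioms k = concat (map (\<lambda>i. [Var i, 1 - Var i]) [0..<k])"

end

theory Submission
  imports Defs
begin

text \<open>Let \<open>P n = (\<Prod>i<n. x i)\<close> and let \<open>D n\<close> be the right-hand side minus the
  left-hand side for the first \<open>n\<close> variables. With \<open>a = P n\<close> and \<open>b = x n\<close>, the ring
  identity \<open>(b - b\<^sup>2) - (a b - (a b)\<^sup>2) + (a - a\<^sup>2) = (1 - a) (1 - b) (a + b + a b)\<close> and
  the telescoping sum \<open>1 - P n = (\<Sum>j<n. P j (1 - x j))\<close> give
  \<open>D (n + 1) - D n = (\<Sum>j<n. P j (1 - x j) (1 - x n) (P n + x n + P n x n))\<close>.
  Expanded, every summand is a product of at most \<open>2 n + 2\<close> axioms \<open>x i\<close> and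
  \<open>1 - x i\<close>, so \<open>D k\<close> is a sum of products of axioms of degree at most \<open>2 k\<close>;
  no squares are needed.\<close>

lemma mdeg_add: "mdeg (a + b) = mdeg a + mdeg b"
  unfolding mdeg_def by (rule setsum_keys_plus_distrib) simp_all

lemma mdeg_le_tdeg: "m \<in> Poly_Mapping.keys p \<Longrightarrow> mdeg m \<le> tdeg p"
  unfolding tdeg_def by simp

lemma tdeg_le_iff: "tdeg p \<le> d \<longleftrightarrow> (\<forall>m\<in>Poly_Mapping.keys p. mdeg m \<le> d)"
  unfolding tdeg_def by simp

lemma tdeg_one: "tdeg 1 = 0"
  by (simp add: tdeg_def mdeg_def)

lemma tdeg_Var: "tdeg (Var i) = 1"
  by (simp add: tdeg_def Var_def mdeg_def)

lemma tdeg_mult_le: "tdeg (p * q) \<le> tdeg p + tdeg q"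
  unfolding tdeg_le_iff
proof
  fix m assume "m \<in> Poly_Mapping.keys (p * q)"
  then obtain a b where "m = a + b" "a \<in> Poly_Mapping.keys p" "b \<in> Poly_Mapping.keys q"
    using keys_mult by blast
  then show "mdeg m \<le> tdeg p + tdeg q"
    by (simp add: mdeg_add add_mono mdeg_le_tdeg)
qed

lemma tdeg_diff_le: "tdeg (p - q) \<le> max (tdeg p) (tdeg q)"
  unfolding tdeg_le_iff
proof
  fix m assume "m \<in> Poly_Mapping.keys (p - q)"
  then have "m \<in> Poly_Mapping.keys p \<union> Poly_Mapping.keys q"
    by (rule subsetD[OF keys_diff])
  then show "mdeg m \<le> max (tdeg p) (tdeg q)"
    using mdeg_le_tdeg[of m p] mdeg_le_tdeg[of m q] by (auto simp: le_max_iff_disj)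
qed

lemma tdeg_prod_list_le: "tdeg (prod_list ps) \<le> sum_list (map tdeg ps)"
proof (induction ps)
  case Nil
  show ?case by (simp add: tdeg_one)
next
  case (Cons p ps)
  then show ?case using tdeg_mult_le[of p "prod_list ps"] by simp
qed

definition has_sos_certificate :: "mpoly list \<Rightarrow> nat \<Rightarrow> mpoly \<Rightarrow> bool" where
  "has_sos_certificate axs d e \<longleftrightarrow> sos_derivation axs d 0 e"

lemma sos_derivation_iff_certificate:
  "sos_derivation axs d p q \<longleftrightarrow> has_sos_certificate axs d (q - p)"
  by (simp add: has_sos_certificate_def sos_derivation_def)

lemma has_sos_certificate_zero: "has_sos_certificate axs d 0"
  unfolding has_sos_certificate_def sos_derivation_def
  by (intro exI[of _ "[]"]) simp

lemma has_sos_certificate_add: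
  assumes "has_sos_certificate axs d a" "has_sos_certificate axs d b"
  shows "has_sos_certificate axs d (a + b)"
proof -
  from assms obtain ss rs ss' rs' where
    "a = sum_list (map (\<lambda>s. s * s) ss)
       + sum_list (map (\<lambda>(r, js). r * r * prod_list (map (\<lambda>j. axs ! j) js)) rs)"
    "\<forall>s\<in>set ss. tdeg (s * s) \<le> d"
    "\<forall>(r, js)\<in>set rs. (\<forall>j\<in>set js. j < length axs)
       \<and> tdeg (r * r * prod_list (map (\<lambda>j. axs ! j) js)) \<le> d"
    "b = sum_list (map (\<lambda>s. s * s) ss')
       + sum_list (map (\<lambda>(r, js). r * r * prod_list (map (\<lambda>j. axs ! j) js)) rs')"
    "\<forall>s\<in>set ss'. tdeg (s * s) \<le> d"
    "\<forall>(r, js)\<in>set rs'. (\<forall>j\<in>set js. j < length axs)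
       \<and> tdeg (r * r * prod_list (map (\<lambda>j. axs ! j) js)) \<le> d"
    unfolding has_sos_certificate_def sos_derivation_def by auto
  then show ?thesis
    unfolding has_sos_certificate_def sos_derivation_def
    by (intro exI[of _ "ss @ ss'"] exI[of _ "rs @ rs'"]) (auto simp: algebra_simps)
qed

lemma has_sos_certificate_sum:
  assumes "\<And>x. x \<in> A \<Longrightarrow> has_sos_certificate axs d (f x)"
  shows "has_sos_certificate axs d (sum f A)"
  using assms
  by (induction A rule: infinite_finite_induct)
    (auto intro: has_sos_certificate_zero has_sos_certificate_add)

lemma obtain_nth_indices:
  assumes "set as \<subseteq> set axs"
  obtains js where "\<forall>j\<in>set js. j < length axs" "as = map (\<lambda>j. axs ! j) js"
  using assms
proof (induction as arbitrary: thesis)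
  case Nil
  then show ?case by auto
next
  case (Cons a as)
  obtain js where "\<forall>j\<in>set js. j < length axs" "as = map (\<lambda>j. axs ! j) js"
    using Cons by auto
  moreover obtain j where "j < length axs" "a = axs ! j"
    using Cons.prems(2) by (auto simp: in_set_conv_nth)
  ultimately show ?case using Cons.prems(1)[of "j # js"] by simp
qed

lemma has_sos_certificate_prod_list:
  assumes "set as \<subseteq> set axs" "tdeg (prod_list as) \<le> d"
  shows "has_sos_certificate axs d (prod_list as)"
proof -
  obtain js where "\<forall>j\<in>set js. j < length axs" "as = map (\<lambda>j. axs ! j) js"
    using obtain_nth_indices assms(1) by blast
  then show ?thesis
    unfolding has_sos_certificate_def sos_derivation_def
    by (intro exI[of _ "[]"] exI[of _ "[(1, js)]"]) (use assms(2) in simp)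
qed

definition axiom_products :: "mpoly list \<Rightarrow> nat \<Rightarrow> mpoly set" where
  "axiom_products axs n = {prod_list as | as. set as \<subseteq> set axs \<and> length as \<le> n}"

lemma one_in_axiom_products: "1 \<in> axiom_products axs n"
  unfolding axiom_products_def by (intro CollectI exI[of _ "[]"]) simp

lemma axiom_in_axiom_products: "a \<in> set axs \<Longrightarrow> 1 \<le> n \<Longrightarrow> a \<in> axiom_products axs n"
  unfolding axiom_products_def by (intro CollectI exI[of _ "[a]"]) simp

lemma axiom_products_mult:
  assumes "e \<in> axiom_products axs m" "f \<in> axiom_products axs n" "m + n \<le> k"
  shows "e * f \<in> axiom_products axs k"
proof -
  obtain as bs where "e = prod_list as" "set as \<subseteq> set axs" "length as \<le> m"
    "f = prod_list bs" "set bs \<subseteq> set axs" "length bs \<le> n"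
    using assms(1,2) unfolding axiom_products_def by blast
  then show ?thesis
    unfolding axiom_products_def using assms(3) by (intro CollectI exI[of _ "as @ bs"]) auto
qed

lemma axiom_products_mono: "m \<le> n \<Longrightarrow> axiom_products axs m \<subseteq> axiom_products axs n"
  unfolding axiom_products_def by auto

lemma has_sos_certificate_axiom_products:
  assumes linear: "\<forall>a\<in>set axs. tdeg a \<le> 1" and "e \<in> axiom_products axs d"
  shows "has_sos_certificate axs d e"
proof -
  obtain as where as: "e = prod_list as" "set as \<subseteq> set axs" "length as \<le> d"
    using assms(2) unfolding axiom_products_def by blast
  have "tdeg (prod_list as) \<le> sum_list (map tdeg as)"
    by (rule tdeg_prod_list_le)
  also have "\<dots> \<le> sum_list (map (\<lambda>_. 1) as)"
    using as(2) linear by (intro sum_list_mono) auto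
  also have "\<dots> \<le> d"
    using as(3) by (simp add: sum_list_triv)
  finally show ?thesis
    using as by (simp add: has_sos_certificate_prod_list)
qed

lemma set_box_axioms: "set (box_axioms K) = Var ` {..<K} \<union> (\<lambda>i. 1 - Var i) ` {..<K}"
  unfolding box_axioms_def by auto

lemma tdeg_box_axioms: "a \<in> set (box_axioms K) \<Longrightarrow> tdeg a \<le> 1"
proof -
  assume "a \<in> set (box_axioms K)"
  then obtain i where "a = Var i \<or> a = 1 - Var i"
    by (auto simp: set_box_axioms)
  then show ?thesis
    using tdeg_diff_le[of 1 "Var i"] by (auto simp: tdeg_Var tdeg_one)
qed

lemma prod_Var_in_axiom_products:
  "n \<le> K \<Longrightarrow> (\<Prod>i<n. Var i) \<in> axiom_products (box_axioms K) n"
proof (induction n)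
  case 0
  show ?case by (simp add: one_in_axiom_products)
next
  case (Suc n)
  have "Var n \<in> axiom_products (box_axioms K) 1"
    using Suc.prems by (simp add: set_box_axioms axiom_in_axiom_products)
  then show ?case
    using Suc axiom_products_mult[of "\<Prod>i<n. Var i" _ n "Var n" 1 "Suc n"] by simp
qed

definition prod_defect :: "(nat \<Rightarrow> 'a::comm_ring_1) \<Rightarrow> nat \<Rightarrow> 'a" where
  "prod_defect x n = (\<Sum>i<n. x i - (x i)^2) - ((\<Prod>i<n. x i) - (\<Prod>i<n. x i)^2)"

lemma one_minus_prod_lessThan:
  fixes x :: "nat \<Rightarrow> 'a::comm_ring_1"
  shows "1 - (\<Prod>i<n. x i) = (\<Sum>j<n. (\<Prod>i<j. x i) * (1 - x j))"
  by (induction n) (simp_all add: algebra_simps)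

lemma prod_defect_Suc:
  fixes x :: "nat \<Rightarrow> 'a::comm_ring_1"
  defines "P \<equiv> \<lambda>n. \<Prod>i<n. x i"
  shows "prod_defect x (Suc n) = prod_defect x n
    + (\<Sum>j<n. P j * (1 - x j) * (1 - x n) * (P n + x n + P n * x n))"
proof -
  have "prod_defect x (Suc n) = prod_defect x n + (1 - P n) * ((1 - x n) * (P n + x n + P n * x n))"
    by (simp add: prod_defect_def P_def algebra_simps power2_eq_square)
  also have "\<dots> = prod_defect x n + (\<Sum>j<n. P j * (1 - x j) * ((1 - x n) * (P n + x n + P n * x n)))"
    by (simp only: P_def one_minus_prod_lessThan sum_distrib_right)
  finally show ?thesis by (simp only: mult.assoc)
qed

lemma has_sos_certificate_box_axiom_products:
  assumes "e \<in> axiom_products (box_axioms K) m" "m \<le> d"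
  shows "has_sos_certificate (box_axioms K) d e"
  using assms axiom_products_mono[of m d] tdeg_box_axioms
  by (intro has_sos_certificate_axiom_products) auto

lemma prod_defect_increment_in_axiom_products:
  defines "P \<equiv> \<lambda>n. \<Prod>i<n. Var i"
  assumes "j < n" "n < K"
  shows "P j * (1 - Var j) * (1 - Var n) * P n \<in> axiom_products (box_axioms K) (2 * n + 2)"
    and "P j * (1 - Var j) * (1 - Var n) * Var n \<in> axiom_products (box_axioms K) (2 * n + 2)"
    and "P j * (1 - Var j) * (1 - Var n) * (P n * Var n) \<in> axiom_products (box_axioms K) (2 * n + 2)"
proof -
  let ?A = "axiom_products (box_axioms K)"
  have axioms: "1 - Var j \<in> ?A 1" "1 - Var n \<in> ?A 1" "Var n \<in> ?A 1"
    using assms(2,3) by (auto simp: set_box_axioms intro: axiom_in_axiom_products)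
  have "P j \<in> ?A j" "P n \<in> ?A n"
    using assms(2,3) by (simp_all add: P_def prod_Var_in_axiom_products)
  then have "P j * (1 - Var j) \<in> ?A n" "P n * Var n \<in> ?A (n + 1)"
    using axioms assms(2) by (auto intro: axiom_products_mult)
  then have "P j * (1 - Var j) * (1 - Var n) \<in> ?A (n + 1)"
    using axioms by (auto intro: axiom_products_mult)
  then show "P j * (1 - Var j) * (1 - Var n) * P n \<in> ?A (2 * n + 2)"
    and "P j * (1 - Var j) * (1 - Var n) * Var n \<in> ?A (2 * n + 2)"
    and "P j * (1 - Var j) * (1 - Var n) * (P n * Var n) \<in> ?A (2 * n + 2)"
    using \<open>P n \<in> ?A n\<close> \<open>P n * Var n \<in> ?A (n + 1)\<close> axioms
    by (auto intro: axiom_products_mult)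
qed

lemma has_sos_certificate_prod_defect:
  assumes "n \<le> K" "2 * n \<le> d"
  shows "has_sos_certificate (box_axioms K) d (prod_defect Var n)"
  using assms
proof (induction n)
  case 0
  show ?case by (simp add: prod_defect_def has_sos_certificate_zero)
next
  case (Suc n)
  let ?P = "\<lambda>n. \<Prod>i<n. Var i"
  have "has_sos_certificate (box_axioms K) d
      (?P j * (1 - Var j) * (1 - Var n) * (?P n + Var n + ?P n * Var n))" if "j < n" for j
    using prod_defect_increment_in_axiom_products[OF that, of K] Suc.prems
    by (simp only: distrib_left)
      (intro has_sos_certificate_add has_sos_certificate_box_axiom_products[where m = "2 * n + 2"]; simp)
  then show ?case
    using Suc by (simp only: prod_defect_Suc) (intro has_sos_certificate_add has_sos_certificate_sum; simp)
qed

theorem claimB2: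
  fixes k :: nat
  assumes "k \<ge> 1"
  shows "sos_derivation (box_axioms k) (2 * k)
           ((\<Prod>i<k. Var i) - (\<Prod>i<k. Var i)^2)
           (\<Sum>i<k. Var i - (Var i)^2)"
proof -
  have "has_sos_certificate (box_axioms k) (2 * k) (prod_defect Var k)"
    by (rule has_sos_certificate_prod_defect) simp_all
  then show ?thesis
    by (simp add: sos_derivation_iff_certificate prod_defect_def)
qed

end
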